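(* Braided crossed modules of Lie algebras are equivalently given by: vector spaces $L_1,L_0$, a linear map $\partial:L_1\to L_0$ and a bilinear map $\{-,-\}:L_0\times L_0\to L_1$ satisfying, for all $a\in L_1$ and $x,u,v,w\in L_0$, (A) $\{\partial a,x\}+\{x,\partial a\}=0$; (B) $\partial\{x,x\}=0$; (C) $\{u,\partial\{v,w\}\}+\{w,\partial\{u,v\}\}+\{v,\partial\{w,u\}\}=0$. Precisely: a braided crossed module satisfies (A),(B),(C), and conversely such data become a braided crossed module of Lie algebras when one defines $[x,y]:=\partial\{x,y\}$ on $L_0$ and $[a,b]:=\{\partial a,\partial b\}$ on $L_1$; these constructions are mutually inverse.
   Context: All vector spaces over a field $k$ of characteristic $\neq2$. A braided crossed module of Lie algebras is a Lie algebra homomorphism $\partial:L_1\to L_0$ with a bilinear map $\{-,-\}:L_0\times L_0\to L_1$ such that for all $x,y,z\in L_0$, $a,b\in L_1$: $\partial\{x,y\}=[x,y]$; $\{\partial a,\partial b\}=[a,b]$; $\{\partial a,x\}+\{x,\partial a\}=0$; $\{x,[y,z]\}+\{z,[x,y]\}+\{y,[z,x]\}=0$. *)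

theory Defs
  imports Complex_Main
begin

definition bilinear_map ::
  "('k::field \<Rightarrow> 'a::ab_group_add \<Rightarrow> 'a) \<Rightarrow> ('k \<Rightarrow> 'b::ab_group_add \<Rightarrow> 'b)
   \<Rightarrow> ('k \<Rightarrow> 'c::ab_group_add \<Rightarrow> 'c) \<Rightarrow> ('a \<Rightarrow> 'b \<Rightarrow> 'c) \<Rightarrow> bool" where
  "bilinear_map sa sb sc f \<longleftrightarrow>
     (\<forall>x. Vector_Spaces.linear sb sc (f x)) \<and> (\<forall>y. Vector_Spaces.linear sa sc (\<lambda>x. f x y))"

definition lie_algebra :: "('k::field \<Rightarrow> 'a::ab_group_add \<Rightarrow> 'a) \<Rightarrow> ('a \<Rightarrow> 'a \<Rightarrow> 'a) \<Rightarrow> bool" where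
  "lie_algebra s br \<longleftrightarrow> vector_space s \<and> bilinear_map s s s br \<and>
     (\<forall>x. br x x = 0) \<and>
     (\<forall>x y z. br x (br y z) + br y (br z x) + br z (br x y) = 0)"

definition lie_hom ::
  "('k::field \<Rightarrow> 'a::ab_group_add \<Rightarrow> 'a) \<Rightarrow> ('k \<Rightarrow> 'b::ab_group_add \<Rightarrow> 'b)
   \<Rightarrow> ('a \<Rightarrow> 'a \<Rightarrow> 'a) \<Rightarrow> ('b \<Rightarrow> 'b \<Rightarrow> 'b) \<Rightarrow> ('a \<Rightarrow> 'b) \<Rightarrow> bool" where
  "lie_hom sa sb bra brb f \<longleftrightarrow> Vector_Spaces.linear sa sb f \<and>
     (\<forall>x y. f (bra x y) = brb (f x) (f y))"

definition braided_crossed_module ::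
  "('k::field \<Rightarrow> 'a::ab_group_add \<Rightarrow> 'a) \<Rightarrow> ('k \<Rightarrow> 'b::ab_group_add \<Rightarrow> 'b)
   \<Rightarrow> ('a \<Rightarrow> 'a \<Rightarrow> 'a) \<Rightarrow> ('b \<Rightarrow> 'b \<Rightarrow> 'b) \<Rightarrow> ('a \<Rightarrow> 'b) \<Rightarrow> ('b \<Rightarrow> 'b \<Rightarrow> 'a) \<Rightarrow> bool" where
  "braided_crossed_module s1 s0 br1 br0 d B \<longleftrightarrow>
     lie_algebra s1 br1 \<and> lie_algebra s0 br0 \<and> lie_hom s1 s0 br1 br0 d \<and>
     bilinear_map s0 s0 s1 B \<and>
     (\<forall>x y. d (B x y) = br0 x y) \<and>
     (\<forall>a b. B (d a) (d b) = br1 a b) \<and>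
     (\<forall>a x. B (d a) x + B x (d a) = 0) \<and>
     (\<forall>x y z. B x (br0 y z) + B z (br0 x y) + B y (br0 z x) = 0)"

definition bcm_data ::
  "('k::field \<Rightarrow> 'a::ab_group_add \<Rightarrow> 'a) \<Rightarrow> ('k \<Rightarrow> 'b::ab_group_add \<Rightarrow> 'b)
   \<Rightarrow> ('a \<Rightarrow> 'b) \<Rightarrow> ('b \<Rightarrow> 'b \<Rightarrow> 'a) \<Rightarrow> bool" where
  "bcm_data s1 s0 d B \<longleftrightarrow>
     Vector_Spaces.linear s1 s0 d \<and> bilinear_map s0 s0 s1 B \<and>
     (\<forall>a x. B (d a) x + B x (d a) = 0) \<and>
     (\<forall>x. d (B x x) = 0) \<and>
     (\<forall>u v w. B u (d (B v w)) + B w (d (B u v)) + B v (d (B w u)) = 0)"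

end

theory Submission
  imports Defs
begin

text \<open>A braided crossed module already determines both brackets, since
  \<open>[x,y] = \<partial>{x,y}\<close> and \<open>[a,b] = {\<partial>a,\<partial>b}\<close>; its remaining axioms then become
  (A), (B) (alternation in \<open>L\<^sub>0\<close>) and (C) (the Jacobi identity in \<open>L\<^sub>0\<close>, pulled back along
  \<open>\<partial>\<close>). Conversely, the Jacobi identity in \<open>L\<^sub>1\<close> is (C) at \<open>\<partial>a, \<partial>b, \<partial>c\<close>, and
  alternation in \<open>L\<^sub>1\<close> follows from (A) at \<open>x = \<partial>a\<close>, which gives \<open>2{\<partial>a,\<partial>a} = 0\<close>;
  this is where the characteristic enters.\<close>

lemma (in vector_space) add_self_eq_zero_imp_eq_zero:
  fixes v :: 'b
  assumes "(2::'a) \<noteq> 0" and "v + v = 0"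
  shows "v = 0"
proof -
  have "2 *s v = 0"
    using assms(2) by (simp only: one_add_one [symmetric] scale_left_distrib scale_one)
  then have "inverse 2 *s (2 *s v) = 0"
    by (simp only: scale_zero_right)
  then show ?thesis
    using assms(1) by (simp add: scale_scale)
qed

lemma linear_compose_fun:
  "Vector_Spaces.linear s1 s2 f \<Longrightarrow> Vector_Spaces.linear s2 s3 g \<Longrightarrow>
   Vector_Spaces.linear s1 s3 (\<lambda>x. g (f x))"
  using Vector_Spaces.linear_compose[of s1 s2 f s3 g] by (simp add: comp_def)

lemma bilinear_map_compose_left:
  assumes "bilinear_map sa sb sc f" and "Vector_Spaces.linear sc sd g"
  shows "bilinear_map sa sb sd (\<lambda>x y. g (f x y))"
  unfolding bilinear_map_def
proof (intro conjI allI)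
  fix x y
  have "Vector_Spaces.linear sb sc (f x)" and "Vector_Spaces.linear sa sc (\<lambda>x. f x y)"
    using assms(1) unfolding bilinear_map_def by auto
  then show "Vector_Spaces.linear sb sd (\<lambda>y. g (f x y))"
    and "Vector_Spaces.linear sa sd (\<lambda>x. g (f x y))"
    using linear_compose_fun[OF _ assms(2)] by blast+
qed

lemma bilinear_map_compose_right:
  assumes "bilinear_map sb sb sc f" and "Vector_Spaces.linear sa sb g"
  shows "bilinear_map sa sa sc (\<lambda>x y. f (g x) (g y))"
  unfolding bilinear_map_def
proof (intro conjI allI)
  fix x y
  have "Vector_Spaces.linear sb sc (f (g x))" and "Vector_Spaces.linear sb sc (\<lambda>x. f x (g y))"
    using assms(1) unfolding bilinear_map_def by auto
  then show "Vector_Spaces.linear sa sc (\<lambda>y. f (g x) (g y))"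
    and "Vector_Spaces.linear sa sc (\<lambda>x. f (g x) (g y))"
    using linear_compose_fun[OF assms(2)] by blast+
qed

lemma braided_crossed_module_brackets:
  assumes "braided_crossed_module s1 s0 br1 br0 d B"
  shows "br0 = (\<lambda>x y. d (B x y))" and "br1 = (\<lambda>a b. B (d a) (d b))"
  using assms unfolding braided_crossed_module_def by (auto intro!: ext)

lemma braided_crossed_module_imp_bcm_data:
  assumes "braided_crossed_module s1 s0 br1 br0 d B"
  shows "bcm_data s1 s0 d B"
  using assms braided_crossed_module_brackets[OF assms]
  unfolding braided_crossed_module_def bcm_data_def lie_hom_def lie_algebra_def
  by simp

context
  fixes s1 :: "'k::field \<Rightarrow> 'a::ab_group_add \<Rightarrow> 'a"
    and s0 :: "'k \<Rightarrow> 'b::ab_group_add \<Rightarrow> 'b"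
    and d :: "'a \<Rightarrow> 'b" and B :: "'b \<Rightarrow> 'b \<Rightarrow> 'a"
  assumes data: "bcm_data s1 s0 d B"
begin

private lemma linear_d: "Vector_Spaces.linear s1 s0 d"
  and bilinear_B: "bilinear_map s0 s0 s1 B"
  and skew_on_image_d: "B (d a) x + B x (d a) = 0"
  and alternating_dB: "d (B x x) = 0"
  and cyclic_dB: "B u (d (B v w)) + B w (d (B u v)) + B v (d (B w u)) = 0"
  using data unfolding bcm_data_def by auto

lemma bcm_data_lie_algebra_L0:
  assumes "vector_space s0"
  shows "lie_algebra s0 (\<lambda>x y. d (B x y))"
  unfolding lie_algebra_def
proof (intro conjI allI)
  show "bilinear_map s0 s0 s0 (\<lambda>x y. d (B x y))"
    by (rule bilinear_map_compose_left[OF bilinear_B linear_d])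
  interpret d: Vector_Spaces.linear s1 s0 d
    by (rule linear_d)
  fix x y z
  show "d (B x x) = 0"
    by (rule alternating_dB)
  have "d (B x (d (B y z)) + B z (d (B x y)) + B y (d (B z x))) = 0"
    using cyclic_dB[of x y z] by simp
  then show "d (B x (d (B y z))) + d (B y (d (B z x))) + d (B z (d (B x y))) = 0"
    by (simp add: d.add ac_simps)
qed fact

lemma bcm_data_lie_algebra_L1:
  assumes "vector_space s1" and "(2::'k) \<noteq> 0"
  shows "lie_algebra s1 (\<lambda>a b. B (d a) (d b))"
  unfolding lie_algebra_def
proof (intro conjI allI)
  show "bilinear_map s1 s1 s1 (\<lambda>a b. B (d a) (d b))"
    by (rule bilinear_map_compose_right[OF bilinear_B linear_d])
  fix a b c
  show "B (d a) (d a) = 0"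
    using vector_space.add_self_eq_zero_imp_eq_zero[OF assms skew_on_image_d[of a "d a"]] .
  show "B (d a) (d (B (d b) (d c))) + B (d b) (d (B (d c) (d a)))
      + B (d c) (d (B (d a) (d b))) = 0"
    using cyclic_dB[of "d a" "d b" "d c"] by (simp add: ac_simps)
qed fact

lemma bcm_data_imp_braided_crossed_module:
  assumes "vector_space s1" and "vector_space s0" and "(2::'k) \<noteq> 0"
  shows "braided_crossed_module s1 s0 (\<lambda>a b. B (d a) (d b)) (\<lambda>x y. d (B x y)) d B"
  using bcm_data_lie_algebra_L1[OF assms(1,3)] bcm_data_lie_algebra_L0[OF assms(2)]
    linear_d bilinear_B skew_on_image_d cyclic_dB
  unfolding braided_crossed_module_def lie_hom_def by auto

end

theorem proposition4p2:
  fixes s1 :: "'k::field \<Rightarrow> 'a::ab_group_add \<Rightarrow> 'a"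
    and s0 :: "'k \<Rightarrow> 'b::ab_group_add \<Rightarrow> 'b"
  assumes "vector_space s1" and "vector_space s0" and "(2::'k) \<noteq> 0"
  shows "(\<forall>br1 br0 d B. braided_crossed_module s1 s0 br1 br0 d B \<longrightarrow>
            bcm_data s1 s0 d B \<and>
            br0 = (\<lambda>x y. d (B x y)) \<and> br1 = (\<lambda>a b. B (d a) (d b))) \<and>
         (\<forall>d B. bcm_data s1 s0 d B \<longrightarrow>
            braided_crossed_module s1 s0 (\<lambda>a b. B (d a) (d b)) (\<lambda>x y. d (B x y)) d B)"
  using braided_crossed_module_imp_bcm_data braided_crossed_module_brackets
    bcm_data_imp_braided_crossed_module[OF _ assms]
  by blast

end
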